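(* Let $\psi:(0,1]\to(0,\infty)$ with $\psi(1)=1$, $\lim_{r\to0+}\psi(r)=0$ and $I_\psi\subset(1,2)$, and let $f\in C^\psi(\mathbb{R}^d)$. Then there exists a constant $C=C(\psi)$ such that for every $i=1,\dots,d$, $$[D_if]_{C^{-1;\psi}}\le C\big(\|f\|_{C^0}+[[f]]_{C^\psi}\big).$$
   Context: $g:(0,1]\to(0,\infty)$ is almost increasing if $c\,g(r)\le g(R)$ for some $c\in(0,1]$ and all $0<r\le R\le1$, almost decreasing if $g(R)\le Cg(r)$ for some $C\ge1$ and all $0<r\le R\le1$. $M_\psi=\inf\{\alpha: \psi(r)/r^\alpha\text{ almost decreasing}\}$, $m_\psi=\sup\{\alpha: \psi(r)/r^\alpha\text{ almost increasing}\}$, $I_\psi=[m_\psi,M_\psi]$. $\|f\|_{C^0}=\sup|f|$; $D_if$ is the $i$-th partial derivative. $[g]_{C^{-1;\psi}}=\sup_x\sup_{0<|h|\le1}\frac{|g(x+h)-g(x)|}{\psi(|h|)|h|^{-1}}$; $[[f]]_{C^\psi}=\sup_x\sup_{0<|h|\le1}\frac{|f(x+h)-2f(x)+f(x-h)|}{\psi(|h|)}$. When $m_\psi\in(1,2]$, $C^\psi(\mathbb{R}^d)$ is the set of continuous $f$ with $f$ and all first partials bounded continuous and $[D_if]_{C^{-1;\psi}}<\infty$ for all $i$. *)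

theory Defs
  imports "HOL-Analysis.Analysis"
begin

definition almost_increasing :: "(real \<Rightarrow> real) \<Rightarrow> bool" where
  "almost_increasing g \<longleftrightarrow>
     (\<exists>c. 0 < c \<and> c \<le> 1 \<and> (\<forall>r R. 0 < r \<and> r \<le> R \<and> R \<le> 1 \<longrightarrow> c * g r \<le> g R))"

definition almost_decreasing :: "(real \<Rightarrow> real) \<Rightarrow> bool" where
  "almost_decreasing g \<longleftrightarrow>
     (\<exists>C. 1 \<le> C \<and> (\<forall>r R. 0 < r \<and> r \<le> R \<and> R \<le> 1 \<longrightarrow> g R \<le> C * g r))"

text \<open>Upper/lower indices, valued in the extended reals (Inf of the empty set is +infinity,
  Sup of the empty set is -infinity).\<close>
definition upper_index :: "(real \<Rightarrow> real) \<Rightarrow> ereal" where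
  "upper_index \<psi> = Inf {ereal \<alpha> | \<alpha>. almost_decreasing (\<lambda>r. \<psi> r / r powr \<alpha>)}"

definition lower_index :: "(real \<Rightarrow> real) \<Rightarrow> ereal" where
  "lower_index \<psi> = Sup {ereal \<alpha> | \<alpha>. almost_increasing (\<lambda>r. \<psi> r / r powr \<alpha>)}"

definition index_interval :: "(real \<Rightarrow> real) \<Rightarrow> ereal set" where
  "index_interval \<psi> = {lower_index \<psi> .. upper_index \<psi>}"

definition partial :: "('a::euclidean_space \<Rightarrow> real) \<Rightarrow> 'a \<Rightarrow> 'a \<Rightarrow> real" where
  "partial f i x = deriv (\<lambda>t. f (x + t *\<^sub>R i)) 0"

definition sup_norm :: "('a::euclidean_space \<Rightarrow> real) \<Rightarrow> real" where
  "sup_norm f = (SUP x. \<bar>f x\<bar>)"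

definition neg_seminorm :: "(real \<Rightarrow> real) \<Rightarrow> ('a::euclidean_space \<Rightarrow> real) \<Rightarrow> ereal" where
  "neg_seminorm \<psi> g = (SUP p \<in> {(x, h). 0 < norm h \<and> norm h \<le> 1}.
      ereal (\<bar>g (fst p + snd p) - g (fst p)\<bar> / (\<psi> (norm (snd p)) * inverse (norm (snd p)))))"

definition second_diff_seminorm :: "(real \<Rightarrow> real) \<Rightarrow> ('a::euclidean_space \<Rightarrow> real) \<Rightarrow> ereal" where
  "second_diff_seminorm \<psi> f = (SUP p \<in> {(x, h). 0 < norm h \<and> norm h \<le> 1}.
      ereal (\<bar>f (fst p + snd p) - 2 * f (fst p) + f (fst p - snd p)\<bar> / \<psi> (norm (snd p))))"

text \<open>The space C^psi for 1 < m_psi <= 2.\<close>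
definition C_psi :: "(real \<Rightarrow> real) \<Rightarrow> ('a::euclidean_space \<Rightarrow> real) set" where
  "C_psi \<psi> = {f. continuous_on UNIV f \<and> bounded (range f) \<and>
     (\<forall>i\<in>Basis. (\<forall>x. (\<lambda>t. f (x + t *\<^sub>R i)) differentiable (at 0)) \<and>
        continuous_on UNIV (partial f i) \<and> bounded (range (partial f i)) \<and>
        neg_seminorm \<psi> (partial f i) < \<infinity>)}"

end

theory Submission
  imports Defs
begin

text \<open>For a unit vector \<open>e\<close> and the difference quotients \<open>Q y t = (f (y + t e) - f y) / t\<close>, the
  identity \<open>Q y t - Q y (2t) = - \<Delta>\<^sup>2\<^sub>t\<^sub>e f (y + t e) / (2t)\<close> bounds consecutive dyadic quotients
  by \<open>k \<psi>(t) / t\<close>, where \<open>k\<close> is the second-difference seminorm. Because \<open>\<psi>(t)/t\<^sup>\<alpha>\<close> is almost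
  increasing for some \<open>\<alpha> > 1\<close> (the lower index exceeds 1), these bounds decay geometrically
  along \<open>t = r/2\<^sup>n\<close>, so \<open>D\<^sub>e f y\<close> differs from \<open>Q y r\<close> by \<open>O(k \<psi>(r)/r)\<close>. Finally, with \<open>r = |h|\<close>,
  \<open>Q (x + h) r - Q x r\<close> is \<open>1/r\<close> times the difference of two second differences centred at
  \<open>x + (h + r e)/2\<close> with steps \<open>(h \<plusminus> r e)/2\<close> of length at most \<open>r\<close>, hence also \<open>O(k \<psi>(r)/r)\<close>.\<close>

lemma geometric_increments_limit_bound:
  fixes a :: "nat \<Rightarrow> real"
  assumes lim: "a \<longlonglongrightarrow> L"
    and step: "\<And>n. \<bar>a (Suc n) - a n\<bar> \<le> B * q ^ Suc n"
    and "0 \<le> B" "0 \<le> q" "q < 1"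
  shows "\<bar>L - a 0\<bar> \<le> B * (q / (1 - q))"
proof -
  have "\<bar>a n - a 0\<bar> \<le> B * (q / (1 - q))" for n
  proof -
    have "\<bar>a n - a 0\<bar> = \<bar>\<Sum>j<n. a (Suc j) - a j\<bar>"
      by (simp add: sum_lessThan_telescope)
    also have "\<dots> \<le> (\<Sum>j<n. B * q ^ Suc j)"
      by (rule order.trans[OF sum_abs sum_mono]) (rule step)
    also have "\<dots> = B * q * (\<Sum>j<n. q ^ j)"
      by (simp add: sum_distrib_left mult.assoc)
    also have "\<dots> = B * q * ((1 - q ^ n) / (1 - q))"
      using assms by (simp add: sum_gp_strict)
    also have "\<dots> \<le> B * q * (1 / (1 - q))"
      using assms by (intro mult_left_mono divide_right_mono) auto
    finally show ?thesis by simp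
  qed
  moreover have "(\<lambda>n. \<bar>a n - a 0\<bar>) \<longlonglongrightarrow> \<bar>L - a 0\<bar>"
    using lim by (intro tendsto_intros)
  ultimately show ?thesis
    by (intro LIMSEQ_le_const2) auto
qed

lemma half_power_powr: "((1/2::real) ^ m) powr b = ((1/2) powr b) ^ m"
proof -
  have "((1/2::real) ^ m) powr b = (1/2) powr (real m * b)"
    by (simp add: powr_realpow[symmetric] powr_powr)
  also have "\<dots> = ((1/2) powr b) ^ m"
    by (simp add: powr_power)
  finally show ?thesis .
qed

definition dyadic_ratio :: "real \<Rightarrow> real" where
  "dyadic_ratio \<alpha> = (1/2) powr (\<alpha> - 1)"

lemma dyadic_ratio_pos: "0 < dyadic_ratio \<alpha>"
  by (simp add: dyadic_ratio_def)

lemma dyadic_ratio_less_1: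
  assumes "1 < \<alpha>"
  shows "dyadic_ratio \<alpha> < 1"
proof -
  have "(1/2::real) powr (\<alpha> - 1) < (1/2) powr 0"
    using assms by (intro powr_less_mono') auto
  then show ?thesis by (simp add: dyadic_ratio_def)
qed

definition derivative_constant :: "real \<Rightarrow> real \<Rightarrow> real" where
  "derivative_constant \<alpha> c = (2 + dyadic_ratio \<alpha> / (1 - dyadic_ratio \<alpha>)) / c"

lemma derivative_constant_pos:
  assumes "1 < \<alpha>" "0 < c"
  shows "0 < derivative_constant \<alpha> c"
  unfolding derivative_constant_def
  using dyadic_ratio_pos[of \<alpha>] dyadic_ratio_less_1[OF assms(1)] assms(2)
  by (intro divide_pos_pos add_pos_nonneg) auto

locale controlled_second_differences =
  fixes \<psi> :: "real \<Rightarrow> real" and c \<alpha> k :: real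
    and f :: "'a::euclidean_space \<Rightarrow> real" and e :: 'a
  assumes c_pos: "0 < c" and alpha_gt_1: "1 < \<alpha>"
    and psi_almost_increasing:
      "\<And>s r. 0 < s \<Longrightarrow> s \<le> r \<Longrightarrow> r \<le> 1 \<Longrightarrow> c * (\<psi> s / s powr \<alpha>) \<le> \<psi> r / r powr \<alpha>"
    and psi_pos: "\<And>r. 0 < r \<Longrightarrow> r \<le> 1 \<Longrightarrow> 0 < \<psi> r"
    and second_diff_bound:
      "\<And>y w. 0 < norm w \<Longrightarrow> norm w \<le> 1 \<Longrightarrow> \<bar>f (y + w) - 2 * f y + f (y - w)\<bar> \<le> k * \<psi> (norm w)"
    and k_nonneg: "0 \<le> k"
    and differentiable_along: "\<And>x. (\<lambda>t. f (x + t *\<^sub>R e)) differentiable (at 0)"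
    and norm_e: "norm e = 1"
begin

lemma psi_le_scaled:
  assumes "0 < s" "s \<le> r" "r \<le> 1"
  shows "\<psi> s \<le> (s / r) powr \<alpha> * \<psi> r / c"
proof -
  have "0 < s powr \<alpha>" "0 < r powr \<alpha>" using assms by auto
  then have "c * \<psi> s \<le> \<psi> r * s powr \<alpha> / r powr \<alpha>"
    using psi_almost_increasing[OF assms] by (simp add: field_simps)
  then have "\<psi> s \<le> (\<psi> r * s powr \<alpha> / r powr \<alpha>) / c"
    using c_pos by (metis mult.commute pos_le_divide_eq)
  then show ?thesis
    by (simp add: powr_divide mult_ac)
qed

lemma second_diff_le:
  assumes "0 < r" "r \<le> 1" "norm w \<le> r"
  shows "\<bar>f (y + w) - 2 * f y + f (y - w)\<bar> \<le> k * \<psi> r / c"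
proof (cases "w = 0")
  case True
  then show ?thesis using psi_pos[OF assms(1,2)] c_pos k_nonneg by simp
next
  case False
  then have w: "0 < norm w" by simp
  have "(norm w / r) powr \<alpha> \<le> 1"
    using assms alpha_gt_1 w by (intro powr_le1) (auto simp: divide_le_eq_1)
  moreover have "0 \<le> \<psi> r / c" using psi_pos[OF assms(1,2)] c_pos by auto
  ultimately have "(norm w / r) powr \<alpha> * \<psi> r / c \<le> \<psi> r / c"
    using mult_right_mono[of _ 1 "\<psi> r / c"] by simp
  then have "\<psi> (norm w) \<le> \<psi> r / c"
    using psi_le_scaled[OF w assms(3,2)] by linarith
  then have "k * \<psi> (norm w) \<le> k * \<psi> r / c"
    using k_nonneg mult_left_mono by fastforce
  moreover have "\<bar>f (y + w) - 2 * f y + f (y - w)\<bar> \<le> k * \<psi> (norm w)"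
    using second_diff_bound[OF w] assms by simp
  ultimately show ?thesis by linarith
qed

definition diff_quot :: "'a \<Rightarrow> real \<Rightarrow> real" where
  "diff_quot y t = (f (y + t *\<^sub>R e) - f y) / t"

lemma diff_quot_doubling:
  assumes "0 < t" "2 * t \<le> r" "r \<le> 1"
  shows "\<bar>diff_quot y t - diff_quot y (2 * t)\<bar> \<le> k / (2 * c) * (\<psi> r / r) * (t / r) powr (\<alpha> - 1)"
proof -
  define z where "z = y + t *\<^sub>R e"
  have norm_te: "norm (t *\<^sub>R e) = t" using norm_e assms by simp
  have "y + (2 * t) *\<^sub>R e = z + t *\<^sub>R e"
    by (simp add: z_def algebra_simps flip: scaleR_left_distrib)
  then have "diff_quot y t - diff_quot y (2 * t) = - (f (z + t *\<^sub>R e) - 2 * f z + f (z - t *\<^sub>R e)) / (2 * t)"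
    unfolding diff_quot_def using assms by (simp add: z_def field_simps)
  then have "\<bar>diff_quot y t - diff_quot y (2 * t)\<bar> = \<bar>f (z + t *\<^sub>R e) - 2 * f z + f (z - t *\<^sub>R e)\<bar> / (2 * t)"
    using assms by simp
  also have "\<dots> \<le> k * \<psi> t / (2 * t)"
    using second_diff_bound[of "t *\<^sub>R e" z] norm_te assms by (intro divide_right_mono) auto
  also have "\<dots> \<le> k * ((t / r) powr \<alpha> * \<psi> r / c) / (2 * t)"
    using psi_le_scaled[of t r] assms k_nonneg by (intro divide_right_mono mult_left_mono) auto
  also have "\<dots> = k / (2 * c) * (\<psi> r / r) * (t / r) powr (\<alpha> - 1)"
  proof -
    have "(t / r) powr \<alpha> = (t / r) powr (\<alpha> - 1) * (t / r)"
      using assms by (simp add: powr_diff)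
    then show ?thesis using assms c_pos by (simp add: field_simps)
  qed
  finally show ?thesis .
qed

lemma diff_quot_dyadic_step:
  assumes "0 < r" "r \<le> 1"
  shows "\<bar>diff_quot y (r * (1/2) ^ Suc n) - diff_quot y (r * (1/2) ^ n)\<bar>
           \<le> k / (2 * c) * (\<psi> r / r) * dyadic_ratio \<alpha> ^ Suc n"
proof -
  define t where "t = r * (1/2) ^ Suc n"
  have double: "2 * t = r * (1/2) ^ n" by (simp add: t_def)
  have "(1/2::real) ^ n \<le> 1" by (simp add: power_le_one)
  then have "2 * t \<le> r" using assms double by (simp add: mult_left_le)
  moreover have "0 < t" using assms by (simp add: t_def)
  ultimately have "\<bar>diff_quot y t - diff_quot y (2 * t)\<bar> \<le> k / (2 * c) * (\<psi> r / r) * (t / r) powr (\<alpha> - 1)"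
    using diff_quot_doubling assms by blast
  moreover have "(t / r) powr (\<alpha> - 1) = dyadic_ratio \<alpha> ^ Suc n"
    using assms half_power_powr[of "Suc n" "\<alpha> - 1"] by (simp add: t_def dyadic_ratio_def)
  ultimately show ?thesis
    unfolding double[symmetric] t_def[symmetric] by simp
qed

lemma partial_minus_diff_quot:
  assumes "0 < r" "r \<le> 1"
  shows "\<bar>partial f e y - diff_quot y r\<bar> \<le> k / (2 * c) * (\<psi> r / r) * (dyadic_ratio \<alpha> / (1 - dyadic_ratio \<alpha>))"
proof -
  have "((\<lambda>t. f (y + t *\<^sub>R e)) has_field_derivative partial f e y) (at 0)"
    using differentiable_along by (simp add: partial_def DERIV_deriv_iff_real_differentiable)
  then have quot_lim: "(diff_quot y \<longlongrightarrow> partial f e y) (at 0)"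
    by (simp add: has_field_derivative_iff diff_quot_def[abs_def])
  have "filterlim (\<lambda>n. r * (1/2::real) ^ n) (at 0) sequentially"
    unfolding filterlim_at using assms
    by (auto intro!: tendsto_mult_right_zero LIMSEQ_power_zero)
  then have "(\<lambda>n. diff_quot y (r * (1/2) ^ n)) \<longlonglongrightarrow> partial f e y"
    by (rule filterlim_compose[OF quot_lim])
  then have "\<bar>partial f e y - diff_quot y (r * (1/2) ^ 0)\<bar>
      \<le> k / (2 * c) * (\<psi> r / r) * (dyadic_ratio \<alpha> / (1 - dyadic_ratio \<alpha>))"
    using psi_pos[OF assms] less_imp_le[OF dyadic_ratio_pos] dyadic_ratio_less_1[OF alpha_gt_1] c_pos k_nonneg assms
    by (intro geometric_increments_limit_bound diff_quot_dyadic_step) auto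
  then show ?thesis by simp
qed

lemma partial_increment_bound:
  assumes "0 < norm h" "norm h \<le> 1"
  shows "\<bar>partial f e (x + h) - partial f e x\<bar>
           \<le> k * derivative_constant \<alpha> c * (\<psi> (norm h) / norm h)"
proof -
  define r where "r = norm h"
  have r: "0 < r" "r \<le> 1" using assms by (auto simp: r_def)
  define m where "m = x + (1/2) *\<^sub>R (h + r *\<^sub>R e)"
  define w\<^sub>1 where "w\<^sub>1 = (1/2) *\<^sub>R (h + r *\<^sub>R e)"
  define w\<^sub>2 where "w\<^sub>2 = (1/2) *\<^sub>R (h - r *\<^sub>R e)"
  have centred: "m + w\<^sub>1 = x + h + r *\<^sub>R e" "m - w\<^sub>1 = x" "m + w\<^sub>2 = x + h" "m - w\<^sub>2 = x + r *\<^sub>R e"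
    unfolding m_def w\<^sub>1_def w\<^sub>2_def by (simp_all add: algebra_simps flip: scaleR_left_distrib)
  have mixed: "diff_quot (x + h) r - diff_quot x r
      = ((f (m + w\<^sub>1) - 2 * f m + f (m - w\<^sub>1)) - (f (m + w\<^sub>2) - 2 * f m + f (m - w\<^sub>2))) / r"
    unfolding diff_quot_def centred using r by (simp add: field_simps)
  have "norm w\<^sub>1 \<le> r" "norm w\<^sub>2 \<le> r"
    using norm_triangle_ineq[of h "r *\<^sub>R e"] norm_triangle_ineq4[of h "r *\<^sub>R e"] r norm_e
    by (simp_all add: w\<^sub>1_def w\<^sub>2_def r_def)
  then have "\<bar>(f (m + w\<^sub>1) - 2 * f m + f (m - w\<^sub>1)) - (f (m + w\<^sub>2) - 2 * f m + f (m - w\<^sub>2))\<bar>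
      \<le> 2 * (k * \<psi> r / c)"
    using second_diff_le[OF r, of w\<^sub>1 m] second_diff_le[OF r, of w\<^sub>2 m] by linarith
  then have "\<bar>diff_quot (x + h) r - diff_quot x r\<bar> \<le> 2 * (k * \<psi> r / c) / r"
    unfolding mixed abs_divide abs_of_pos[OF r(1)] using r by (intro divide_right_mono) auto
  with partial_minus_diff_quot[OF r, of "x + h"] partial_minus_diff_quot[OF r, of x]
  have "\<bar>partial f e (x + h) - partial f e x\<bar>
      \<le> 2 * (k * \<psi> r / c) / r + 2 * (k / (2 * c) * (\<psi> r / r) * (dyadic_ratio \<alpha> / (1 - dyadic_ratio \<alpha>)))"
    by linarith
  also have "\<dots> = k * derivative_constant \<alpha> c * (\<psi> r / r)"
  proof -
    have "2 * (k * \<psi> r / c) / r + 2 * (k / (2 * c) * (\<psi> r / r) * Q) = k * ((2 + Q) / c) * (\<psi> r / r)"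
      for Q using c_pos r by (simp add: field_simps)
    from this[of "dyadic_ratio \<alpha> / (1 - dyadic_ratio \<alpha>)"] show ?thesis
      by (simp only: derivative_constant_def)
  qed
  finally show ?thesis by (simp add: r_def)
qed

end

lemma almost_increasing_exponent_le_almost_decreasing_exponent:
  assumes one: "\<psi> 1 = 1"
    and "almost_increasing (\<lambda>r. \<psi> r / r powr \<alpha>)"
    and "almost_decreasing (\<lambda>r. \<psi> r / r powr \<beta>)"
  shows "\<alpha> \<le> \<beta>"
proof (rule ccontr)
  assume "\<not> \<alpha> \<le> \<beta>"
  then have ab: "0 < \<alpha> - \<beta>" by simp
  obtain c where c: "0 < c" "c \<le> 1"
    and inc: "\<forall>r R. 0 < r \<and> r \<le> R \<and> R \<le> 1 \<longrightarrow> c * (\<psi> r / r powr \<alpha>) \<le> \<psi> R / R powr \<alpha>"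
    using assms(2) unfolding almost_increasing_def by blast
  obtain D where D: "1 \<le> D"
    and dec: "\<forall>r R. 0 < r \<and> r \<le> R \<and> R \<le> 1 \<longrightarrow> \<psi> R / R powr \<beta> \<le> D * (\<psi> r / r powr \<beta>)"
    using assms(3) unfolding almost_decreasing_def by blast
  \<comment> \<open>At the scale \<open>s\<close> with \<open>s\<^sup>\<alpha>\<^sup>-\<^sup>\<beta> = c/(2D)\<close> the bounds \<open>s\<^sup>\<beta>/D \<le> \<psi> s \<le> s\<^sup>\<alpha>/c\<close> are incompatible.\<close>
  define s where "s = (c / (2 * D)) powr (1 / (\<alpha> - \<beta>))"
  have cD: "0 < c / (2 * D)" "c / (2 * D) \<le> 1" using c D by (auto simp: field_simps)
  have s: "0 < s" "s \<le> 1" unfolding s_def using cD ab by (auto intro: powr_le1)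
  have "\<psi> s \<le> s powr \<alpha> / c" using inc[rule_format, of s 1] s one c by (simp add: field_simps)
  moreover have "s powr \<beta> / D \<le> \<psi> s" using dec[rule_format, of s 1] s one D by (simp add: field_simps)
  ultimately have "s powr \<beta> / D \<le> s powr \<alpha> / c" by linarith
  then have "c / D \<le> s powr \<alpha> / s powr \<beta>" using c D s by (simp add: field_simps)
  also have "\<dots> = s powr (\<alpha> - \<beta>)"
    by (simp add: powr_diff)
  also have "\<dots> = c / (2 * D)"
    unfolding s_def using cD ab c D by (simp add: powr_powr)
  finally show False using c D by (simp add: field_simps)
qed

lemma lower_index_le_upper_index:
  assumes "\<psi> 1 = 1"
  shows "lower_index \<psi> \<le> upper_index \<psi>"
  unfolding lower_index_def upper_index_def
  using almost_increasing_exponent_le_almost_decreasing_exponent[where \<psi> = \<psi>, OF assms]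
  by (auto intro!: Sup_least Inf_greatest)

lemma almost_increasing_exponent_gt_1:
  assumes "\<psi> 1 = 1" "index_interval \<psi> \<subseteq> {ereal 1 <..< ereal 2}"
  obtains \<alpha> c where "1 < \<alpha>" "0 < c"
    "\<And>s r. 0 < s \<Longrightarrow> s \<le> r \<Longrightarrow> r \<le> 1 \<Longrightarrow> c * (\<psi> s / s powr \<alpha>) \<le> \<psi> r / r powr \<alpha>"
proof -
  have "lower_index \<psi> \<in> index_interval \<psi>"
    using lower_index_le_upper_index[where \<psi> = \<psi>, OF assms(1)] by (simp add: index_interval_def)
  with assms(2) have "ereal 1 < lower_index \<psi>" by auto
  then obtain \<alpha> where "1 < \<alpha>" "almost_increasing (\<lambda>r. \<psi> r / r powr \<alpha>)"
    unfolding lower_index_def by (auto simp: less_Sup_iff)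
  then show ?thesis
    using that unfolding almost_increasing_def by blast
qed

lemma sup_norm_nonneg:
  assumes "bounded (range f)"
  shows "0 \<le> sup_norm f"
proof -
  have "bdd_above (range (\<lambda>x. \<bar>f x\<bar>))"
    using assms unfolding bounded_iff by (auto intro: bdd_aboveI2)
  then have "\<bar>f 0\<bar> \<le> sup_norm f"
    unfolding sup_norm_def using cSUP_upper[of 0 UNIV "\<lambda>x. \<bar>f x\<bar>"] by simp
  then show ?thesis by linarith
qed

lemma second_diff_le_seminorm:
  assumes "0 < norm w" "norm w \<le> 1"
  shows "ereal (\<bar>f (y + w) - 2 * f y + f (y - w)\<bar> / \<psi> (norm w)) \<le> second_diff_seminorm \<psi> f"
  unfolding second_diff_seminorm_def
  by (rule SUP_upper2[where i = "(y, w)"]) (use assms in auto)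

lemma second_diff_seminorm_nonneg:
  fixes f :: "'a::euclidean_space \<Rightarrow> real"
  assumes "\<forall>r. 0 < r \<and> r \<le> 1 \<longrightarrow> 0 < \<psi> r"
  shows "0 \<le> second_diff_seminorm \<psi> f"
proof -
  obtain e :: 'a where "e \<in> Basis" using nonempty_Basis by blast
  then have "norm e = 1" by simp
  then have "ereal (\<bar>f (0 + e) - 2 * f 0 + f (0 - e)\<bar> / \<psi> (norm e)) \<le> second_diff_seminorm \<psi> f"
    by (intro second_diff_le_seminorm) simp_all
  moreover have "0 \<le> \<bar>f (0 + e) - 2 * f 0 + f (0 - e)\<bar> / \<psi> (norm e)"
    using assms[rule_format, of 1] \<open>norm e = 1\<close> by simp
  ultimately show ?thesis
    by (meson ereal_less_eq(5) order.trans)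
qed

lemma neg_seminorm_le:
  fixes g :: "'a::euclidean_space \<Rightarrow> real"
  assumes pos: "\<forall>r. 0 < r \<and> r \<le> 1 \<longrightarrow> 0 < \<psi> r"
    and bound: "\<And>x h. 0 < norm h \<Longrightarrow> norm h \<le> 1 \<Longrightarrow> \<bar>g (x + h) - g x\<bar> \<le> B * (\<psi> (norm h) / norm h)"
  shows "neg_seminorm \<psi> g \<le> ereal B"
  unfolding neg_seminorm_def
proof (rule SUP_least)
  fix p :: "'a \<times> 'a"
  assume "p \<in> {(x, h). 0 < norm h \<and> norm h \<le> 1}"
  then obtain x h where p: "p = (x, h)" and h: "0 < norm h" "norm h \<le> 1" by auto
  have "0 < \<psi> (norm h) * inverse (norm h)" using h pos by simp
  then have "\<bar>g (x + h) - g x\<bar> / (\<psi> (norm h) * inverse (norm h)) \<le> B"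
    by (subst pos_divide_le_eq) (use bound[OF h] in \<open>simp_all add: divide_inverse\<close>)
  then show "ereal (\<bar>g (fst p + snd p) - g (fst p)\<bar> / (\<psi> (norm (snd p)) * inverse (norm (snd p))))
      \<le> ereal B"
    by (simp add: p)
qed

lemma neg_seminorm_partial_le:
  fixes f :: "'a::euclidean_space \<Rightarrow> real"
  assumes pos: "\<forall>r. 0 < r \<and> r \<le> 1 \<longrightarrow> 0 < \<psi> r"
    and \<alpha>: "1 < \<alpha>" and c: "0 < c"
    and inc: "\<And>s r. 0 < s \<Longrightarrow> s \<le> r \<Longrightarrow> r \<le> 1 \<Longrightarrow> c * (\<psi> s / s powr \<alpha>) \<le> \<psi> r / r powr \<alpha>"
    and f: "f \<in> C_psi \<psi>" and i: "i \<in> Basis"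
  shows "neg_seminorm \<psi> (partial f i)
           \<le> ereal (derivative_constant \<alpha> c) * (ereal (sup_norm f) + second_diff_seminorm \<psi> f)"
proof (cases "second_diff_seminorm \<psi> f")
  case PInf
  then show ?thesis using derivative_constant_pos[OF \<alpha> c] by simp
next
  case MInf
  then show ?thesis using second_diff_seminorm_nonneg[OF pos, of f] by simp
next
  case (real k)
  have k_nonneg: "0 \<le> k" using second_diff_seminorm_nonneg[OF pos, of f] real by simp
  have "\<bar>f (y + w) - 2 * f y + f (y - w)\<bar> \<le> k * \<psi> (norm w)"
    if "0 < norm w" "norm w \<le> 1" for y w
    using second_diff_le_seminorm[OF that, of f y \<psi>] pos that real by (simp add: field_simps)
  moreover have "(\<lambda>t. f (x + t *\<^sub>R i)) differentiable (at 0)" for x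
    using f i by (simp add: C_psi_def)
  ultimately interpret controlled_second_differences \<psi> c \<alpha> k f i
    using c \<alpha> inc pos k_nonneg i by unfold_locales simp_all
  have "neg_seminorm \<psi> (partial f i) \<le> ereal (k * derivative_constant \<alpha> c)"
    by (rule neg_seminorm_le[OF pos partial_increment_bound])
  also have "\<dots> \<le> ereal (derivative_constant \<alpha> c * (sup_norm f + k))"
  proof -
    have "bounded (range f)" using f by (simp add: C_psi_def)
    then have "0 \<le> derivative_constant \<alpha> c * sup_norm f"
      using sup_norm_nonneg derivative_constant_pos[OF \<alpha> c] by (metis less_imp_le mult_nonneg_nonneg)
    then show ?thesis by (simp add: algebra_simps)
  qed
  finally show ?thesis using real by simp
qed

theorem lemma2p4:
  fixes \<psi> :: "real \<Rightarrow> real"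
  assumes "\<forall>r. 0 < r \<and> r \<le> 1 \<longrightarrow> 0 < \<psi> r"
    and "\<psi> 1 = 1"
    and "(\<psi> \<longlongrightarrow> 0) (at_right 0)"
    and "index_interval \<psi> \<subseteq> {ereal 1 <..< ereal 2}"
  shows "\<exists>C::real. 0 < C \<and> (\<forall>(f::'a::euclidean_space \<Rightarrow> real) \<in> C_psi \<psi>. \<forall>i\<in>Basis.
           neg_seminorm \<psi> (partial f i)
             \<le> ereal C * (ereal (sup_norm f) + second_diff_seminorm \<psi> f))"
proof -
  obtain \<alpha> c where \<alpha>: "1 < \<alpha>" and c: "0 < c"
    and inc: "\<And>s r. 0 < s \<Longrightarrow> s \<le> r \<Longrightarrow> r \<le> 1 \<Longrightarrow> c * (\<psi> s / s powr \<alpha>) \<le> \<psi> r / r powr \<alpha>"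
    using almost_increasing_exponent_gt_1[OF assms(2,4)] by blast
  show ?thesis
  proof (intro exI conjI ballI)
    show "0 < derivative_constant \<alpha> c"
      by (rule derivative_constant_pos[OF \<alpha> c])
    fix f :: "'a \<Rightarrow> real" and i :: 'a
    assume "f \<in> C_psi \<psi>" "i \<in> Basis"
    then show "neg_seminorm \<psi> (partial f i)
        \<le> ereal (derivative_constant \<alpha> c) * (ereal (sup_norm f) + second_diff_seminorm \<psi> f)"
      using neg_seminorm_partial_le[OF assms(1) \<alpha> c inc] by blast
  qed
qed

end
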